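(* Let $V=V_{\bar0}\oplus V_{\bar1}$ be an $\mathcal{L}$-module which is free of rank $2$ as a $\mathbb{C}[L_{0,0}]$-module, with homogeneous basis elements $1_{\bar0}\in V_{\bar0}$ and $1_{\bar1}\in V_{\bar1}$; write $f(t)1_{\bar0}:=f(L_{0,0})1_{\bar0}$ and $g(x)1_{\bar1}:=g(L_{0,0})1_{\bar1}$ for polynomials $f,g$. Suppose $\lambda\in\mathbb{C}^*$ and $a,b\in\mathbb{C}$ are such that for all $f\in\mathbb{C}[t]$, $g\in\mathbb{C}[x]$, $m\in\mathbb{Z}$, $i\in\mathbb{Z}_+$: $L_{m,i}f(t)1_{\bar0}=\lambda^m(\delta_{i,0}(t-mqa)+\delta_{q,-1}\delta_{i,1}b)f(t-mq)1_{\bar0}$, $L_{m,i}g(x)1_{\bar1}=\lambda^m(\delta_{i,0}(x-mq(a+\frac12))+\delta_{q,-1}\delta_{i,1}b)g(x-mq)1_{\bar1}$, and moreover $G_{\frac12,0}1_{\bar0}=1_{\bar1}$, $G_{\frac12,1}1_{\bar0}=0$, $G_{\frac12,0}1_{\bar1}=q\lambda(t-qa)1_{\bar0}$, $G_{\frac12,1}1_{\bar1}=2q\lambda\delta_{q,-1}b1_{\bar0}$. Then for all $m\in\frac12+\mathbb{Z}$ and $i\in\mathbb{Z}_+$: $$G_{m,i}1_{\bar0}=\lambda^{m-\frac12}\delta_{i,0}1_{\bar1},\qquad G_{m,i}1_{\bar1}=q\lambda^{m+\frac12}\big(\delta_{i,0}(t-2mqa)+2\delta_{q,-1}\delta_{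i,1}b\big)1_{\bar0}.$$
   Context: Fix $q\in\mathbb{C}^*$; $\mathbb{Z}_+=\{0,1,2,\dots\}$; $\delta$ is the Kronecker delta. The Neveu-Schwarz-Block algebra $\mathcal{L}$ is the Lie superalgebra over $\mathbb{C}$ with even basis $\{L_{m,i}\mid m\in\mathbb{Z},i\in\mathbb{Z}_+\}$, odd basis $\{G_{l,j}\mid l\in\frac12+\mathbb{Z},j\in\mathbb{Z}_+\}$ and brackets $[L_{m,i},L_{n,j}]=(n(i+q)-m(j+q))L_{m+n,i+j}$, $[L_{m,i},G_{l,j}]=(l(i+q)-m(j+\frac{q}{2}))G_{m+l,i+j}$, $[G_{l,i},G_{r,j}]=2qL_{l+r,i+j}$. Modules are supermodules. $L_{0,0}$ acts on $V_{\bar0}=\mathbb{C}[L_{0,0}]1_{\bar0}\cong\mathbb{C}[t]$ as multiplication by $t$ and on $V_{\bar1}=\mathbb{C}[L_{0,0}]1_{\bar1}\cong\mathbb{C}[x]$ as multiplication by $x$. *)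

theory Defs
  imports "HOL-Computational_Algebra.Polynomial"
begin

text \<open>The module V = V_0 (+) V_1 with V_0 = C[t] 1_0 and V_1 = C[x] 1_1, L_{0,0} acting as
multiplication by the variable, is represented by pairs (f, g) of complex polynomials,
(f, g) standing for f(L_{0,0}) 1_0 + g(L_{0,0}) 1_1.
Odd index l = k + 1/2 in 1/2 + Z is encoded by the integer k.\<close>

type_synonym vec = "complex poly \<times> complex poly"

definition vadd :: "vec \<Rightarrow> vec \<Rightarrow> vec" where
  "vadd v w = (fst v + fst w, snd v + snd w)"

definition vsmult :: "complex \<Rightarrow> vec \<Rightarrow> vec" where
  "vsmult c v = (smult c (fst v), smult c (snd v))"

definition vdiff :: "vec \<Rightarrow> vec \<Rightarrow> vec" where
  "vdiff v w = (fst v - fst w, snd v - snd w)"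

definition delta :: "'a \<Rightarrow> 'a \<Rightarrow> complex" where
  "delta x y = (if x = y then 1 else 0)"

text \<open>L m i is the action of L_{m,i}; G k j is the action of G_{k+1/2, j}.\<close>

definition is_NSB_module ::
  "complex \<Rightarrow> (int \<Rightarrow> nat \<Rightarrow> vec \<Rightarrow> vec) \<Rightarrow> (int \<Rightarrow> nat \<Rightarrow> vec \<Rightarrow> vec) \<Rightarrow> bool" where
  "is_NSB_module q L G \<longleftrightarrow>
     (\<forall>m i v w. L m i (vadd v w) = vadd (L m i v) (L m i w)) \<and>
     (\<forall>m i c v. L m i (vsmult c v) = vsmult c (L m i v)) \<and>
     (\<forall>k j v w. G k j (vadd v w) = vadd (G k j v) (G k j w)) \<and>
     (\<forall>k j c v. G k j (vsmult c v) = vsmult c (G k j v)) \<and>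
     (\<forall>m i f. snd (L m i (f, 0)) = 0) \<and>
     (\<forall>m i g. fst (L m i (0, g)) = 0) \<and>
     (\<forall>k j f. fst (G k j (f, 0)) = 0) \<and>
     (\<forall>k j g. snd (G k j (0, g)) = 0) \<and>
     (\<forall>m i n j v.
        vdiff (L m i (L n j v)) (L n j (L m i v))
          = vsmult ((of_int n * (of_nat i + q) - of_int m * (of_nat j + q))) (L (m + n) (i + j) v)) \<and>
     (\<forall>m i k j v.
        vdiff (L m i (G k j v)) (G k j (L m i v))
          = vsmult (((of_int k + 1/2) * (of_nat i + q) - of_int m * (of_nat j + q / 2)))
                   (G (m + k) (i + j) v)) \<and>
     (\<forall>k i r j v.
        vadd (G k i (G r j v)) (G r j (G k i v))
          = vsmult (2 * q) (L (k + r + 1) (i + j) v))"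

end

theory Submission
  imports Defs
begin

(* The commutator [L_{0,0}, G_{l,j}] = l q G_{l,j} gives G_{l,j} p(L_{0,0}) = p(L_{0,0} - l q) G_{l,j},
   so G_{l,j} is determined by its values on 1_0 and 1_1. Applying [L_{m,i}, G_{l,j}] = c G_{m+l,i+j}
   to the two generators expresses G_{m+l,i+j} through G_{l,j} whenever c is nonzero, and the
   claimed values satisfy the same relation. Starting from G_{1/2,0} and G_{1/2,1} every G_{l,i}
   is reached with a nonzero constant: for i > 0 the two candidate constants differ by l \<noteq> 0, and
   G_{3/2,0}, the one index not reached from G_{1/2,0}, is reached through G_{-1/2,0}. *)

definition vpmult :: "complex poly \<Rightarrow> vec \<Rightarrow> vec" where
  "vpmult p v = (p * fst v, p * snd v)"

definition LG_const :: "complex \<Rightarrow> int \<Rightarrow> nat \<Rightarrow> int \<Rightarrow> nat \<Rightarrow> complex" where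
  "LG_const q m i k j = (of_int k + 1/2) * (of_nat i + q) - of_int m * (of_nat j + q / 2)"

lemma vsmult_cancel: "vsmult c v = vsmult c w \<Longrightarrow> c \<noteq> 0 \<Longrightarrow> v = w"
  by (auto simp: vsmult_def prod_eq_iff intro: smult_cancel)

locale NSB_module =
  fixes q :: complex and L G :: "int \<Rightarrow> nat \<Rightarrow> vec \<Rightarrow> vec"
  assumes module: "is_NSB_module q L G"
begin

lemma L_vadd: "L m i (vadd v w) = vadd (L m i v) (L m i w)"
  using module unfolding is_NSB_module_def by fast

lemma G_vadd: "G k j (vadd v w) = vadd (G k j v) (G k j w)"
  using module unfolding is_NSB_module_def by fast

lemma G_vsmult: "G k j (vsmult c v) = vsmult c (G k j v)"
  using module unfolding is_NSB_module_def by fast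

lemma LG_commutator:
  "vdiff (L m i (G k j v)) (G k j (L m i v)) = vsmult (LG_const q m i k j) (G (m + k) (i + j) v)"
  using module unfolding is_NSB_module_def LG_const_def by fast

lemma G_vpmult:
  assumes L00: "\<And>v. L 0 0 v = vpmult [:0, 1:] v"
  shows "G k j (vpmult p v) = vpmult (p \<circ>\<^sub>p [:- (of_int k + 1/2) * q, 1:]) (G k j v)"
proof (induction p rule: pCons_induct)
  case 0
  have "vpmult 0 w = vsmult 0 w" for w by (simp add: vpmult_def vsmult_def)
  then show ?case by (simp add: G_vsmult)
next
  case (pCons c p)
  have G_L00: "G k j (L 0 0 w) = vdiff (L 0 0 (G k j w)) (vsmult ((of_int k + 1/2) * q) (G k j w))" for w
    using LG_commutator[of 0 0 k j w] by (auto simp: vdiff_def LG_const_def prod_eq_iff algebra_simps)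
  have "vpmult (pCons c p) v = vadd (vsmult c v) (L 0 0 (vpmult p v))"
    by (simp add: L00 vpmult_def vadd_def vsmult_def algebra_simps)
  then have "G k j (vpmult (pCons c p) v)
      = vadd (vsmult c (G k j v))
          (vdiff (L 0 0 (G k j (vpmult p v))) (vsmult ((of_int k + 1/2) * q) (G k j (vpmult p v))))"
    by (simp only: G_vadd G_vsmult G_L00)
  also have "\<dots> = vpmult (pCons c p \<circ>\<^sub>p [:- (of_int k + 1/2) * q, 1:]) (G k j v)"
    unfolding pCons.IH
    by (simp add: L00 vpmult_def vadd_def vsmult_def vdiff_def pcompose_pCons algebra_simps
        flip: smult_add_left)
  finally show ?case .
qed

end

definition L_factor :: "complex \<Rightarrow> complex \<Rightarrow> complex \<Rightarrow> int \<Rightarrow> nat \<Rightarrow> complex poly" where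
  "L_factor q a b m i =
     [: delta i (0::nat) * (- of_int m * q * a) + delta q (-1) * delta i (1::nat) * b, delta i (0::nat) :]"

definition G_on_even :: "complex \<Rightarrow> int \<Rightarrow> nat \<Rightarrow> complex poly" where
  "G_on_even lam k i = [: lam powi k * delta i (0::nat) :]"

definition G_on_odd :: "complex \<Rightarrow> complex \<Rightarrow> complex \<Rightarrow> complex \<Rightarrow> int \<Rightarrow> nat \<Rightarrow> complex poly" where
  "G_on_odd q lam a b k i =
     smult (q * lam powi (k + 1))
       [: delta i (0::nat) * (- 2 * (of_int k + 1/2) * q * a) + 2 * delta q (-1) * delta i (1::nat) * b,
          delta i (0::nat) :]"

(* The claimed values of G on 1_0 and 1_1 are compatible with [L_{m,i}, G_{k,j}]. *)
lemma G_on_even_bracket: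
  assumes "lam \<noteq> 0"
  shows "smult (lam powi m) (L_factor q (a + 1/2) b m i * G_on_even lam k j \<circ>\<^sub>p [:- of_int m * q, 1:])
       - smult (lam powi m) (L_factor q a b m i) \<circ>\<^sub>p [:- (of_int k + 1/2) * q, 1:] * G_on_even lam k j
       = smult (LG_const q m i k j) (G_on_even lam (m + k) (i + j))"
  using assms
  by (simp add: L_factor_def G_on_even_def LG_const_def delta_def power_int_add
      poly_eq_poly_eq_iff[symmetric] fun_eq_iff poly_pcompose; (simp add: algebra_simps)?)

lemma G_on_odd_bracket:
  assumes "lam \<noteq> 0"
  shows "smult (lam powi m) (L_factor q a b m i * G_on_odd q lam a b k j \<circ>\<^sub>p [:- of_int m * q, 1:])
       - smult (lam powi m) (L_factor q (a + 1/2) b m i) \<circ>\<^sub>p [:- (of_int k + 1/2) * q, 1:]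
           * G_on_odd q lam a b k j
       = smult (LG_const q m i k j) (G_on_odd q lam a b (m + k) (i + j))"
  using assms
  by (simp add: L_factor_def G_on_odd_def LG_const_def delta_def power_int_add
      poly_eq_poly_eq_iff[symmetric] fun_eq_iff poly_pcompose; (simp add: algebra_simps)?)

locale NSB_rank_two_module = NSB_module +
  fixes lam a b :: complex
  assumes q_nz: "q \<noteq> 0"
    and lam_nz: "lam \<noteq> 0"
    and L_even: "L m i (f, 0) = (smult (lam powi m) (L_factor q a b m i * f \<circ>\<^sub>p [:- of_int m * q, 1:]), 0)"
    and L_odd: "L m i (0, g) = (0, smult (lam powi m) (L_factor q (a + 1/2) b m i * g \<circ>\<^sub>p [:- of_int m * q, 1:]))"
begin

definition G_basis_values :: "int \<Rightarrow> nat \<Rightarrow> bool" where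
  "G_basis_values k j \<longleftrightarrow>
     G k j (1, 0) = (0, G_on_even lam k j) \<and> G k j (0, 1) = (G_on_odd q lam a b k j, 0)"

lemma L00_eq_vpmult: "L 0 0 v = vpmult [:0, 1:] v"
proof -
  have "v = vadd (fst v, 0) (0, snd v)" by (simp add: vadd_def)
  then have "L 0 0 v = vadd (L 0 0 (fst v, 0)) (L 0 0 (0, snd v))" by (metis L_vadd)
  then show ?thesis by (simp add: L_even L_odd L_factor_def delta_def vadd_def vpmult_def)
qed

lemma G_shift: "G k j (vpmult p v) = vpmult (p \<circ>\<^sub>p [:- (of_int k + 1/2) * q, 1:]) (G k j v)"
  using G_vpmult L00_eq_vpmult by blast

lemma G_basis_values_propagate:
  assumes basis: "G_basis_values k j" and nz: "LG_const q m i k j \<noteq> 0"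
  shows "G_basis_values (m + k) (i + j)"
proof -
  let ?c = "LG_const q m i k j"
  have G10: "G k j (1, 0) = (0, G_on_even lam k j)" and G01: "G k j (0, 1) = (G_on_odd q lam a b k j, 0)"
    using basis by (simp_all add: G_basis_values_def)
  have L10: "L m i (1, 0) = vpmult (smult (lam powi m) (L_factor q a b m i)) (1, 0)"
    and L01: "L m i (0, 1) = vpmult (smult (lam powi m) (L_factor q (a + 1/2) b m i)) (0, 1)"
    by (simp_all add: L_even L_odd vpmult_def pcompose_1)
  have "vsmult ?c (G (m + k) (i + j) (1, 0)) = vdiff (L m i (G k j (1, 0))) (G k j (L m i (1, 0)))"
    by (rule LG_commutator[symmetric])
  also have "\<dots> = vsmult ?c (0, G_on_even lam (m + k) (i + j))"
    unfolding L10 G_shift G10 L_odd using G_on_even_bracket[OF lam_nz, of m q a b i k j]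
    by (simp only: vpmult_def vdiff_def vsmult_def fst_conv snd_conv) simp
  finally have even: "G (m + k) (i + j) (1, 0) = (0, G_on_even lam (m + k) (i + j))"
    using nz by (rule vsmult_cancel)
  have "vsmult ?c (G (m + k) (i + j) (0, 1)) = vdiff (L m i (G k j (0, 1))) (G k j (L m i (0, 1)))"
    by (rule LG_commutator[symmetric])
  also have "\<dots> = vsmult ?c (G_on_odd q lam a b (m + k) (i + j), 0)"
    unfolding L01 G_shift G01 L_even using G_on_odd_bracket[OF lam_nz, of m q a b i k j]
    by (simp only: vpmult_def vdiff_def vsmult_def fst_conv snd_conv) simp
  finally have odd: "G (m + k) (i + j) (0, 1) = (G_on_odd q lam a b (m + k) (i + j), 0)"
    using nz by (rule vsmult_cancel)
  show ?thesis using even odd by (simp add: G_basis_values_def)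
qed

lemma G_basis_values_all:
  assumes base0: "G_basis_values 0 0" and base1: "G_basis_values 0 1"
  shows "G_basis_values m i"
proof (cases i)
  case 0
  show ?thesis
  proof (cases "m = 1")
    case True
    have "G_basis_values (-1) 0"
      using G_basis_values_propagate[OF base0, of "-1" 0] q_nz by (simp add: LG_const_def)
    then have "G_basis_values 1 0"
      using G_basis_values_propagate[of "-1" 0 2 0] q_nz by (simp add: LG_const_def)
    then show ?thesis using True 0 by simp
  next
    case False
    have "LG_const q m 0 0 0 = q * (1 - of_int m) / 2" by (simp add: LG_const_def algebra_simps)
    also have "\<dots> \<noteq> 0" using q_nz False by simp
    finally have "G_basis_values (m + 0) (0 + 0)" using base0 by (rule G_basis_values_propagate[rotated])
    then show ?thesis using 0 by simp
  qed
next
  case (Suc i')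
  have "of_int m + 1/2 \<noteq> (0::complex)"
  proof
    assume "of_int m + 1/2 = (0::complex)"
    then have "of_int (2 * m + 1) = (0::complex)" by (simp add: field_simps)
    then show False by presburger
  qed
  moreover have "LG_const q m (Suc i') 0 0 - LG_const q m i' 0 1 = of_int m + 1/2"
    by (simp add: LG_const_def algebra_simps)
  ultimately consider "LG_const q m (Suc i') 0 0 \<noteq> 0" | "LG_const q m i' 0 1 \<noteq> 0" by force
  then show ?thesis
  proof cases
    case 1
    then have "G_basis_values (m + 0) (Suc i' + 0)" using base0 by (rule G_basis_values_propagate[rotated])
    then show ?thesis using Suc by simp
  next
    case 2
    then have "G_basis_values (m + 0) (i' + 1)" using base1 by (rule G_basis_values_propagate[rotated])
    then show ?thesis using Suc by simp
  qed
qed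

end

theorem lemma5p2:
  fixes q lam a b :: complex
    and L G :: "int \<Rightarrow> nat \<Rightarrow> vec \<Rightarrow> vec"
  assumes q_nz: "q \<noteq> 0"
    and lam_nz: "lam \<noteq> 0"
    and module: "is_NSB_module q L G"
    and L0: "\<And>m i f. L m i (f, 0) =
        (smult (lam powi m)
           ([: delta i (0::nat) * (- of_int m * q * a) + delta q (-1) * delta i (1::nat) * b,
               delta i (0::nat) :] * pcompose f [: - of_int m * q, 1 :]), 0)"
    and L1: "\<And>m i g. L m i (0, g) =
        (0, smult (lam powi m)
           ([: delta i (0::nat) * (- of_int m * q * (a + 1/2)) + delta q (-1) * delta i (1::nat) * b,
               delta i (0::nat) :] * pcompose g [: - of_int m * q, 1 :]))"
    and G00: "G 0 0 (1, 0) = (0, 1)"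
    and G01: "G 0 1 (1, 0) = (0, 0)"
    and G10: "G 0 0 (0, 1) = (smult (q * lam) [: - q * a, 1 :], 0)"
    and G11: "G 0 1 (0, 1) = ([: 2 * q * lam * delta q (-1) * b :], 0)"
  shows "\<forall>k i. G k i (1, 0) = (0, [: lam powi k * delta i (0::nat) :]) \<and>
           G k i (0, 1) =
             (smult (q * lam powi (k + 1))
                [: delta i (0::nat) * (- 2 * (of_int k + 1/2) * q * a)
                     + 2 * delta q (-1) * delta i (1::nat) * b,
                   delta i (0::nat) :], 0)"
proof -
  interpret NSB_rank_two_module q L G lam a b
    by unfold_locales (simp_all add: q_nz lam_nz module L0 L1 L_factor_def)
  have "G_basis_values 0 0" "G_basis_values 0 1"
    using G00 G01 G10 G11 by (simp_all add: G_basis_values_def G_on_even_def G_on_odd_def delta_def)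
  then have "G_basis_values k i" for k i by (rule G_basis_values_all)
  then show ?thesis by (simp add: G_basis_values_def G_on_even_def G_on_odd_def)
qed

end
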